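(* Let $K$ be a finite simplicial complex, $N\subseteq K$ closed, and $\mathcal V_1,\mathcal V_2$ multivector fields on $K$ with $\mathcal V_2\sqsubseteq\mathcal V_1$. Let $M_1$ be an isolated invariant set under $\mathcal V_1$ isolated by $N$, and let $M_2$ be a minimal Morse set in $N$ under $\mathcal V_2$ (an isolated invariant set under $\mathcal V_2$, isolated by $N$, which is minimal). If $M_1\cap M_2\neq\emptyset$, then $M_2\subseteq M_1$.
   Context: $\sigma\le\tau$ means $\sigma$ is a face of $\tau$; $\mathrm{cl}(A)$ is the set of faces of simplices in $A$; $A$ is closed if $A=\mathrm{cl}(A)$. A multivector is a convex subset of $K$ w.r.t. $\le$; a multivector field $\mathcal V$ is a partition of $K$ into multivectors; $[\sigma]_{\mathcal V}$ is the multivector containing $\sigma$. $\mathcal V_2\sqsubseteq\mathcal V_1$ means each multivector of $\mathcal V_2$ is contained in one of $\mathcal V_1$. $F_{\mathcal V}(\sigma)=[\sigma]_{\mathcal V}\cup\mathrm{cl}(\sigma)$. A path is a finite sequence $\sigma_0,\dots,\sigma_m$ with $\sigma_j\in F_{\mathcal V}(\sigma_{j-1})$; a solution is a bi-infinite such sequence. A multivector $V$ is critical if $H_k(\mathrm{cl}(V),\mathrm{cl}(V)\setminus V)\neq0$ for some $k$ (coefficients in a finite field), regular otherwise. A solution $\rho:\mathbb Z\to K$ is essential if for each $i$ with $[\rho(i)]_{\mathcal V}$ regular there exist $i^-<i<i^+$ with $[\rho(i^-)]_{\mathcal V}\ne[\rho(i)]_{\mathcal V}\ne[\rho(i^+)]_{\mathcal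 V}$. $\mathrm{inv}_{\mathcal V}(A)$ is the set of $\sigma\in A$ that lie on some essential solution with image in $A$; $S$ is invariant if $\mathrm{inv}_{\mathcal V}(S)=S$. An invariant set $S$ is isolated by the closed set $N$ if $S$ is a union of multivectors of $\mathcal V$ and every path $\rho:\mathbb Z\cap[a,b]\to N$ with $\rho(a),\rho(b)\in S$ has image in $S$. A Morse decomposition of $S$ indexed by a finite poset $\mathbb P$ is a family $\{M_p\}$ of mutually disjoint isolated invariant subsets of $S$ such that every essential solution $\rho$ in $S$ either has image in a single $M_r$ or satisfies $\alpha(\rho)\subseteq M_q$, $\omega(\rho)\subseteq M_p$ with $q>p$ ($\alpha(\rho)=\bigcap_{i\ge1}\rho((-\infty,-i])$, $\omega(\rho)=\bigcap_{i\ge1}\rho([i,\infty))$). $S$ is minimal if its only Morse decomposition is $\{S\}$. *)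

theory Defs
  imports Main
begin

text \<open>Simplices are finite nonempty sets of vertices; vertices carry a linear order,
  used to orient simplices. The face relation is set inclusion.\<close>

definition simplicial_complex :: "'v set set \<Rightarrow> bool" where
  "simplicial_complex K \<longleftrightarrow> finite K \<and> (\<forall>\<sigma>\<in>K. finite \<sigma> \<and> \<sigma> \<noteq> {}) \<and>
     (\<forall>\<sigma>\<in>K. \<forall>\<tau>. \<tau> \<noteq> {} \<and> \<tau> \<subseteq> \<sigma> \<longrightarrow> \<tau> \<in> K)"

definition cl :: "'v set set \<Rightarrow> 'v set set" where
  "cl A = {\<tau>. \<tau> \<noteq> {} \<and> (\<exists>\<sigma>\<in>A. \<tau> \<subseteq> \<sigma>)}"

definition closed_set :: "'v set set \<Rightarrow> bool" where
  "closed_set A \<longleftrightarrow> A = cl A"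

definition multivector :: "'v set set \<Rightarrow> 'v set set \<Rightarrow> bool" where
  "multivector K V \<longleftrightarrow> V \<subseteq> K \<and>
     (\<forall>a\<in>V. \<forall>c\<in>V. \<forall>b\<in>K. a \<subseteq> b \<and> b \<subseteq> c \<longrightarrow> b \<in> V)"

definition multivector_field :: "'v set set \<Rightarrow> 'v set set set \<Rightarrow> bool" where
  "multivector_field K \<V> \<longleftrightarrow> (\<forall>V\<in>\<V>. V \<noteq> {} \<and> multivector K V) \<and>
     (\<forall>V\<in>\<V>. \<forall>W\<in>\<V>. V \<noteq> W \<longrightarrow> V \<inter> W = {}) \<and> \<Union>\<V> = K"

definition mv :: "'v set set set \<Rightarrow> 'v set \<Rightarrow> 'v set set" where
  "mv \<V> \<sigma> = (THE V. V \<in> \<V> \<and> \<sigma> \<in> V)"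

definition refines :: "'v set set set \<Rightarrow> 'v set set set \<Rightarrow> bool" where
  "refines \<V>2 \<V>1 \<longleftrightarrow> (\<forall>V\<in>\<V>2. \<exists>W\<in>\<V>1. V \<subseteq> W)"

definition Fmap :: "'v set set set \<Rightarrow> 'v set \<Rightarrow> 'v set set" where
  "Fmap \<V> \<sigma> = mv \<V> \<sigma> \<union> cl {\<sigma>}"

definition is_solution :: "'v set set set \<Rightarrow> (int \<Rightarrow> 'v set) \<Rightarrow> bool" where
  "is_solution \<V> \<rho> \<longleftrightarrow> (\<forall>i. \<rho> (i + 1) \<in> Fmap \<V> (\<rho> i))"

definition path_in :: "'v set set set \<Rightarrow> 'v set set \<Rightarrow> int \<Rightarrow> int \<Rightarrow> (int \<Rightarrow> 'v set) \<Rightarrow> bool" where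
  "path_in \<V> N a b \<rho> \<longleftrightarrow> a \<le> b \<and> (\<forall>i. a \<le> i \<and> i < b \<longrightarrow> \<rho> (i + 1) \<in> Fmap \<V> (\<rho> i)) \<and>
     (\<forall>i. a \<le> i \<and> i \<le> b \<longrightarrow> \<rho> i \<in> N)"

text \<open>Incidence number [\<sigma>:\<tau>] for the orientation given by the vertex order:
  (-1)^j where j is the position of the removed vertex in sorted \<sigma>.\<close>
definition incidence :: "'f::field itself \<Rightarrow> 'v::linorder set \<Rightarrow> 'v set \<Rightarrow> 'f" where
  "incidence F \<sigma> \<tau> = (if \<tau> \<subseteq> \<sigma> \<and> card \<sigma> = card \<tau> + 1
      then (-1) ^ card {w\<in>\<sigma>. w < the_elem (\<sigma> - \<tau>)} else 0)"

text \<open>Relative k-chains of (cl V, cl V - V): chains supported on k-simplices of V.\<close>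
definition rel_chains :: "'f::field itself \<Rightarrow> 'v::linorder set set \<Rightarrow> nat \<Rightarrow> ('v set \<Rightarrow> 'f) set" where
  "rel_chains F V k = {c. \<forall>\<sigma>. c \<sigma> \<noteq> 0 \<longrightarrow> \<sigma> \<in> V \<and> card \<sigma> = k + 1}"

definition rel_boundary :: "'f::field itself \<Rightarrow> 'v::linorder set set \<Rightarrow> ('v set \<Rightarrow> 'f) \<Rightarrow> ('v set \<Rightarrow> 'f)" where
  "rel_boundary F V c = (\<lambda>\<tau>. if \<tau> \<in> V then (\<Sum>\<sigma>\<in>V. incidence F \<sigma> \<tau> * c \<sigma>) else 0)"

definition rel_cycles :: "'f::field itself \<Rightarrow> 'v::linorder set set \<Rightarrow> nat \<Rightarrow> ('v set \<Rightarrow> 'f) set" where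
  "rel_cycles F V k = {c \<in> rel_chains F V k. rel_boundary F V c = (\<lambda>_. 0)}"

definition rel_boundaries :: "'f::field itself \<Rightarrow> 'v::linorder set set \<Rightarrow> nat \<Rightarrow> ('v set \<Rightarrow> 'f) set" where
  "rel_boundaries F V k = rel_boundary F V ` rel_chains F V (k + 1)"

text \<open>H_k(cl V, cl V - V; F) \<noteq> 0 iff the relative k-cycles differ from the relative k-boundaries.\<close>
definition critical :: "'f::{field,finite} itself \<Rightarrow> 'v::linorder set set \<Rightarrow> bool" where
  "critical F V \<longleftrightarrow> (\<exists>k. rel_cycles F V k \<noteq> rel_boundaries F V k)"

definition regular :: "'f::{field,finite} itself \<Rightarrow> 'v::linorder set set \<Rightarrow> bool" where
  "regular F V \<longleftrightarrow> \<not> critical F V"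

definition essential :: "'f::{field,finite} itself \<Rightarrow> 'v::linorder set set set \<Rightarrow> (int \<Rightarrow> 'v set) \<Rightarrow> bool" where
  "essential F \<V> \<rho> \<longleftrightarrow> is_solution \<V> \<rho> \<and>
     (\<forall>i. regular F (mv \<V> (\<rho> i)) \<longrightarrow>
        (\<exists>i1 i2. i1 < i \<and> i < i2 \<and> mv \<V> (\<rho> i1) \<noteq> mv \<V> (\<rho> i) \<and> mv \<V> (\<rho> i) \<noteq> mv \<V> (\<rho> i2)))"

definition inv :: "'f::{field,finite} itself \<Rightarrow> 'v::linorder set set set \<Rightarrow> 'v set set \<Rightarrow> 'v set set" where
  "inv F \<V> A = {\<sigma>\<in>A. \<exists>\<rho>. essential F \<V> \<rho> \<and> range \<rho> \<subseteq> A \<and> \<sigma> \<in> range \<rho>}"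

definition invariant :: "'f::{field,finite} itself \<Rightarrow> 'v::linorder set set set \<Rightarrow> 'v set set \<Rightarrow> bool" where
  "invariant F \<V> S \<longleftrightarrow> inv F \<V> S = S"

definition isolated_by :: "'f::{field,finite} itself \<Rightarrow> 'v::linorder set set set \<Rightarrow> 'v set set \<Rightarrow> 'v set set \<Rightarrow> bool" where
  "isolated_by F \<V> N S \<longleftrightarrow> invariant F \<V> S \<and> closed_set N \<and> S \<subseteq> N \<and>
     (\<forall>\<sigma>\<in>S. mv \<V> \<sigma> \<subseteq> S) \<and>
     (\<forall>\<rho> a b. path_in \<V> N a b \<rho> \<and> \<rho> a \<in> S \<and> \<rho> b \<in> S \<longrightarrow> (\<forall>i. a \<le> i \<and> i \<le> b \<longrightarrow> \<rho> i \<in> S))"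

definition isolated_invariant :: "'f::{field,finite} itself \<Rightarrow> 'v::linorder set set \<Rightarrow> 'v set set set \<Rightarrow> 'v set set \<Rightarrow> bool" where
  "isolated_invariant F K \<V> S \<longleftrightarrow> (\<exists>N. N \<subseteq> K \<and> isolated_by F \<V> N S)"

definition alpha_limit :: "(int \<Rightarrow> 'v set) \<Rightarrow> 'v set set" where
  "alpha_limit \<rho> = (\<Inter>i\<in>{1::int..}. \<rho> ` {..-i})"

definition omega_limit :: "(int \<Rightarrow> 'v set) \<Rightarrow> 'v set set" where
  "omega_limit \<rho> = (\<Inter>i\<in>{1::int..}. \<rho> ` {i..})"

definition morse_decomposition ::
  "'f::{field,finite} itself \<Rightarrow> 'v::linorder set set \<Rightarrow> 'v set set set \<Rightarrow> 'v set set
    \<Rightarrow> nat set \<Rightarrow> (nat \<Rightarrow> nat \<Rightarrow> bool) \<Rightarrow> (nat \<Rightarrow> 'v set set) \<Rightarrow> bool" where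
  "morse_decomposition F K \<V> S P le M \<longleftrightarrow>
     finite P \<and>
     (\<forall>p\<in>P. le p p) \<and> (\<forall>p\<in>P. \<forall>q\<in>P. le p q \<and> le q p \<longrightarrow> p = q) \<and>
     (\<forall>p\<in>P. \<forall>q\<in>P. \<forall>r\<in>P. le p q \<and> le q r \<longrightarrow> le p r) \<and>
     (\<forall>p\<in>P. M p \<subseteq> S \<and> isolated_invariant F K \<V> (M p)) \<and>
     (\<forall>p\<in>P. \<forall>q\<in>P. p \<noteq> q \<longrightarrow> M p \<inter> M q = {}) \<and>
     (\<forall>\<rho>. essential F \<V> \<rho> \<and> range \<rho> \<subseteq> S \<longrightarrow>
        (\<exists>r\<in>P. range \<rho> \<subseteq> M r) \<or>
        (\<exists>p\<in>P. \<exists>q\<in>P. le p q \<and> q \<noteq> p \<and> alpha_limit \<rho> \<subseteq> M q \<and> omega_limit \<rho> \<subseteq> M p))"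

definition minimal :: "'f::{field,finite} itself \<Rightarrow> 'v::linorder set set \<Rightarrow> 'v set set set \<Rightarrow> 'v set set \<Rightarrow> bool" where
  "minimal F K \<V> S \<longleftrightarrow>
     (\<forall>P le M. morse_decomposition F K \<V> S P le M \<longrightarrow> (\<forall>p\<in>P. M p = {} \<or> M p = S))"

end

theory Submission
  imports Defs
begin

text \<open>
  Give a simplex of M2 level 1 if it lies in M1, level 2 if it lies outside M1 but can reach M1
  by V2-steps inside N, and level 0 otherwise. Every V2-step is a V1-step and M1 is isolated by N,
  so a path in N that leaves M1 never comes back; hence the level cannot increase along V2-steps
  in M2. An essential solution in M2 therefore has eventually constant level in both time
  directions, and its limit sets lie in the invariant parts of the corresponding level sets, which
  are again isolated by N: these invariant parts form a Morse decomposition of M2. Minimality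
  makes the level constant on M2, and since M2 meets M1 it is 1 everywhere.
\<close>

lemma mv_in_field:
  assumes "multivector_field K V" and "\<sigma> \<in> K"
  shows "mv V \<sigma> \<in> V" and "\<sigma> \<in> mv V \<sigma>"
proof -
  have "\<exists>!W. W \<in> V \<and> \<sigma> \<in> W"
    using assms unfolding multivector_field_def by blast
  from theI'[OF this] show "mv V \<sigma> \<in> V" and "\<sigma> \<in> mv V \<sigma>"
    unfolding mv_def by auto
qed

lemma mv_eqI:
  assumes "multivector_field K V" and "W \<in> V" and "\<sigma> \<in> W"
  shows "mv V \<sigma> = W"
proof -
  have "\<exists>!W. W \<in> V \<and> \<sigma> \<in> W"
    using assms unfolding multivector_field_def by blast
  from the1_equality[OF this] assms(2,3) show ?thesis
    unfolding mv_def by blast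
qed

lemma mv_eq_if_mem:
  assumes "multivector_field K V" and "\<sigma> \<in> K" and "\<tau> \<in> mv V \<sigma>"
  shows "mv V \<tau> = mv V \<sigma>"
  using mv_eqI[OF assms(1) mv_in_field(1)[OF assms(1,2)] assms(3)] .

lemma Fmap_refines_subset:
  assumes "multivector_field K V1" and "multivector_field K V2" and "refines V2 V1"
    and "\<sigma> \<in> K"
  shows "Fmap V2 \<sigma> \<subseteq> Fmap V1 \<sigma>"
proof -
  obtain W where "W \<in> V1" and W: "mv V2 \<sigma> \<subseteq> W"
    using assms(3) mv_in_field(1)[OF assms(2,4)] unfolding refines_def by blast
  moreover have "\<sigma> \<in> W"
    using W mv_in_field(2)[OF assms(2,4)] by blast
  ultimately have "mv V2 \<sigma> \<subseteq> mv V1 \<sigma>"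
    using mv_eqI[OF assms(1)] by blast
  then show ?thesis
    unfolding Fmap_def by blast
qed

section \<open>Essential solutions\<close>

lemma essentialI:
  assumes "is_solution V \<rho>"
    and "\<And>j. regular F (mv V (\<rho> j)) \<Longrightarrow> \<exists>i<j. mv V (\<rho> i) \<noteq> mv V (\<rho> j)"
    and "\<And>j. regular F (mv V (\<rho> j)) \<Longrightarrow> \<exists>i>j. mv V (\<rho> i) \<noteq> mv V (\<rho> j)"
  shows "essential F V \<rho>"
  unfolding essential_def using assms by (blast dest: sym)

lemma essential_solution: "essential F V \<rho> \<Longrightarrow> is_solution V \<rho>"
  unfolding essential_def by blast

lemma essentialD:
  assumes "essential F V \<rho>" and "regular F (mv V (\<rho> j))"
  shows "\<exists>i<j. mv V (\<rho> i) \<noteq> mv V (\<rho> j)" and "\<exists>i>j. mv V (\<rho> i) \<noteq> mv V (\<rho> j)"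
  using assms unfolding essential_def by (blast dest: sym)+

lemma essential_shift:
  assumes "essential F V \<rho>"
  shows "essential F V (\<lambda>t. \<rho> (t + c))"
proof (rule essentialI)
  show "is_solution V (\<lambda>t. \<rho> (t + c))"
    unfolding is_solution_def
  proof
    fix t
    have "\<rho> (t + c + 1) \<in> Fmap V (\<rho> (t + c))"
      using essential_solution[OF assms] unfolding is_solution_def by blast
    then show "\<rho> (t + 1 + c) \<in> Fmap V (\<rho> (t + c))"
      by (simp add: ac_simps)
  qed
next
  fix j assume "regular F (mv V (\<rho> (j + c)))"
  from essentialD[OF assms this] obtain i1 i2 where "i1 < j + c" "j + c < i2"
    and "mv V (\<rho> i1) \<noteq> mv V (\<rho> (j + c))" "mv V (\<rho> i2) \<noteq> mv V (\<rho> (j + c))"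
    by blast
  then show "\<exists>i<j. mv V (\<rho> (i + c)) \<noteq> mv V (\<rho> (j + c))"
    and "\<exists>i>j. mv V (\<rho> (i + c)) \<noteq> mv V (\<rho> (j + c))"
    by (metis add_less_cancel_right diff_add_cancel)+
qed

lemma essential_change_before:
  assumes "essential F V r" and agree: "\<forall>t\<le>c. s t = r t" and "regular F (mv V (s j))"
  shows "\<exists>i<j. mv V (s i) \<noteq> mv V (s j)"
proof (cases "j \<le> c")
  case True
  with essentialD(1)[OF assms(1), of j] agree assms(3) obtain i
    where "i < j" "mv V (r i) \<noteq> mv V (r j)"
    by auto
  then show ?thesis
    using True agree by (intro exI[of _ i]) auto
next
  case False
  show ?thesis
  proof (cases "mv V (s c) = mv V (s j)")
    case True
    with essentialD(1)[OF assms(1), of c] agree assms(3) obtain i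
      where "i < c" "mv V (r i) \<noteq> mv V (r c)"
      by auto
    then show ?thesis
      using False True agree by (intro exI[of _ i]) auto
  next
    case False
    then show ?thesis
      using \<open>\<not> j \<le> c\<close> by (intro exI[of _ c]) auto
  qed
qed

lemma essential_change_after:
  assumes "essential F V r" and agree: "\<forall>t\<ge>c. s t = r t" and "regular F (mv V (s j))"
  shows "\<exists>i>j. mv V (s i) \<noteq> mv V (s j)"
proof (cases "c \<le> j")
  case True
  with essentialD(2)[OF assms(1), of j] agree assms(3) obtain i
    where "j < i" "mv V (r i) \<noteq> mv V (r j)"
    by auto
  then show ?thesis
    using True agree by (intro exI[of _ i]) auto
next
  case False
  show ?thesis
  proof (cases "mv V (s c) = mv V (s j)")
    case True
    with essentialD(2)[OF assms(1), of c] agree assms(3) obtain i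
      where "c < i" "mv V (r i) \<noteq> mv V (r c)"
      by auto
    then show ?thesis
      using False True agree by (intro exI[of _ i]) auto
  next
    case False
    then show ?thesis
      using \<open>\<not> c \<le> j\<close> by (intro exI[of _ c]) auto
  qed
qed

lemma essential_if_agrees_on_rays:
  assumes "is_solution V s"
    and "essential F V r1" and "\<forall>t\<le>a. s t = r1 t"
    and "essential F V r2" and "\<forall>t\<ge>b. s t = r2 t"
  shows "essential F V s"
proof (rule essentialI[OF assms(1)])
  fix j assume "regular F (mv V (s j))"
  then show "\<exists>i<j. mv V (s i) \<noteq> mv V (s j)"
    by (rule essential_change_before[OF assms(2,3)])
  from \<open>regular F (mv V (s j))\<close> show "\<exists>i>j. mv V (s i) \<noteq> mv V (s j)"
    by (rule essential_change_after[OF assms(4,5)])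
qed

lemma essential_splice:
  assumes r1: "essential F V r1" and r2: "essential F V r2"
    and g: "path_in V N a b g" and "g a = r1 t1" and "g b = r2 t2"
  shows "\<exists>s. essential F V s \<and> range s \<subseteq> range r1 \<union> g ` {a..b} \<union> range r2
    \<and> g ` {a..b} \<subseteq> range s"
proof -
  define s where "s t = (if t \<le> a then r1 (t + (t1 - a))
    else if t \<le> b then g t else r2 (t + (t2 - b)))" for t
  have "a \<le> b"
    using g unfolding path_in_def by simp
  have s1: "\<forall>t\<le>a. s t = r1 (t + (t1 - a))"
    unfolding s_def by simp
  have s2: "s t = g t" if "a \<le> t" "t \<le> b" for t
    using that assms(4) unfolding s_def by auto
  have s3: "\<forall>t\<ge>b. s t = r2 (t + (t2 - b))"
    using \<open>a \<le> b\<close> assms(4,5) unfolding s_def by auto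
  have e1: "essential F V (\<lambda>t. r1 (t + (t1 - a)))"
    using r1 by (rule essential_shift)
  have e2: "essential F V (\<lambda>t. r2 (t + (t2 - b)))"
    using r2 by (rule essential_shift)
  have "is_solution V s"
    unfolding is_solution_def
  proof
    fix t
    consider "t < a" | "a \<le> t" "t < b" | "b \<le> t" by linarith
    then show "s (t + 1) \<in> Fmap V (s t)"
    proof cases
      case 1
      then show ?thesis
        using essential_solution[OF e1] s1 unfolding is_solution_def by simp
    next
      case 2
      then show ?thesis
        using g s2[of t] s2[of "t + 1"] unfolding path_in_def by simp
    next
      case 3
      then show ?thesis
        using essential_solution[OF e2] s3 unfolding is_solution_def by simp
    qed
  qed
  then have "essential F V s"
    using e1 s1 e2 s3 by (rule essential_if_agrees_on_rays)
  moreover have "range s \<subseteq> range r1 \<union> g ` {a..b} \<union> range r2"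
  proof (rule image_subsetI)
    fix t
    consider "t \<le> a" | "a \<le> t" "t \<le> b" | "b \<le> t" by linarith
    then show "s t \<in> range r1 \<union> g ` {a..b} \<union> range r2"
      by cases (simp_all add: s1 s2 s3)
  qed
  moreover have "g ` {a..b} \<subseteq> range s"
  proof (rule image_subsetI)
    fix t assume "t \<in> {a..b}"
    then have "g t = s t"
      using s2 by simp
    then show "g t \<in> range s"
      by simp
  qed
  ultimately show ?thesis
    by blast
qed

definition periodic_extension :: "(int \<Rightarrow> 'a) \<Rightarrow> int \<Rightarrow> int \<Rightarrow> int \<Rightarrow> 'a" where
  "periodic_extension r a b t = r (a + t mod (b - a))"

lemma periodic_extension_periodic:
  "periodic_extension r a b (t + (b - a) * m) = periodic_extension r a b t"
  unfolding periodic_extension_def by simp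

lemma periodic_extension_eq: "a \<le> t \<Longrightarrow> t < b \<Longrightarrow> periodic_extension r a b (t - a) = r t"
  unfolding periodic_extension_def by simp

lemma range_periodic_extension:
  assumes "a < b"
  shows "range (periodic_extension r a b) = r ` {a..<b}"
proof
  show "range (periodic_extension r a b) \<subseteq> r ` {a..<b}"
  proof (rule image_subsetI)
    fix t
    have "b - a > 0"
      using assms by simp
    then have "0 \<le> t mod (b - a)" and "t mod (b - a) < b - a"
      by simp_all
    then have "a + t mod (b - a) \<in> {a..<b}"
      unfolding atLeastLessThan_iff by linarith
    then show "periodic_extension r a b t \<in> r ` {a..<b}"
      unfolding periodic_extension_def by (rule imageI)
  qed
  show "r ` {a..<b} \<subseteq> range (periodic_extension r a b)"
  proof (rule image_subsetI)
    fix t assume "t \<in> {a..<b}"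
    then have "r t = periodic_extension r a b (t - a)"
      by (simp add: periodic_extension_eq)
    then show "r t \<in> range (periodic_extension r a b)"
      by simp
  qed
qed

lemma is_solution_periodic_extension:
  assumes r: "is_solution V r" and "a < b" and "r a = r b"
  shows "is_solution V (periodic_extension r a b)"
  unfolding is_solution_def
proof
  fix t
  define p where "p = b - a"
  have "p > 0"
    using \<open>a < b\<close> unfolding p_def by simp
  have mod_Suc: "(t + 1) mod p = (t mod p + 1) mod p"
    by (simp add: mod_add_left_eq)
  have "r (a + (t + 1) mod p) = r (a + t mod p + 1)"
  proof (cases "t mod p + 1 = p")
    case True
    with mod_Suc have "(t + 1) mod p = 0"
      by simp
    with True \<open>r a = r b\<close> show ?thesis
      unfolding p_def by (simp add: add.assoc)
  next
    case False
    then have "t mod p + 1 < p"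
      using pos_mod_bound[OF \<open>p > 0\<close>, of t] by linarith
    with mod_Suc \<open>p > 0\<close> have "(t + 1) mod p = t mod p + 1"
      by (simp add: mod_pos_pos_trivial)
    then show ?thesis
      by (simp add: add.assoc)
  qed
  moreover have "r (a + t mod p + 1) \<in> Fmap V (r (a + t mod p))"
    using r unfolding is_solution_def by blast
  ultimately show "periodic_extension r a b (t + 1) \<in> Fmap V (periodic_extension r a b t)"
    unfolding periodic_extension_def p_def by simp
qed

lemma essential_periodicI:
  assumes "is_solution V s" and "p > 0" and periodic: "\<And>t m. s (t + p * m) = s t"
    and moves: "\<And>j. regular F (mv V (s j)) \<Longrightarrow> \<exists>k. mv V (s k) \<noteq> mv V (s j)"
  shows "essential F V s"
proof (rule essentialI[OF assms(1)])
  fix j assume "regular F (mv V (s j))"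
  then obtain k where k: "mv V (s k) \<noteq> mv V (s j)"
    using moves by blast
  define m where "m = \<bar>k - j\<bar> + 1"
  have "m \<le> p * m"
    using \<open>p > 0\<close> unfolding m_def by simp
  then have "k + p * (- m) < j" and "j < k + p * m"
    unfolding m_def by linarith+
  then show "\<exists>i<j. mv V (s i) \<noteq> mv V (s j)" and "\<exists>i>j. mv V (s i) \<noteq> mv V (s j)"
    using k periodic[of k "- m"] periodic[of k m] by auto
qed

lemma essential_periodic_extension:
  assumes r: "is_solution V r" and "a < b" and "r a = r b"
    and turn: "critical F (mv V (r a)) \<or> (\<exists>k. a < k \<and> k < b \<and> mv V (r k) \<noteq> mv V (r a))"
  shows "essential F V (periodic_extension r a b)"
proof (rule essential_periodicI)
  show "is_solution V (periodic_extension r a b)"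
    using assms(1-3) by (rule is_solution_periodic_extension)
  show "b - a > 0"
    using \<open>a < b\<close> by simp
  show "periodic_extension r a b (t + (b - a) * m) = periodic_extension r a b t" for t m
    by (rule periodic_extension_periodic)
next
  fix j
  let ?s = "periodic_extension r a b"
  assume "regular F (mv V (?s j))"
  show "\<exists>k. mv V (?s k) \<noteq> mv V (?s j)"
  proof (rule ccontr)
    assume "\<nexists>k. mv V (?s k) \<noteq> mv V (?s j)"
    then have const: "mv V (?s k) = mv V (?s j)" for k
      by blast
    have "?s 0 = r a"
      unfolding periodic_extension_def by simp
    then have "\<not> critical F (mv V (r a))"
      using \<open>regular F (mv V (?s j))\<close> const[of 0] unfolding regular_def by simp
    then obtain k where "a < k" "k < b" "mv V (r k) \<noteq> mv V (r a)"
      using turn by blast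
    then show False
      using const[of "k - a"] const[of 0] \<open>?s 0 = r a\<close> periodic_extension_eq[of a k b r] by simp
  qed
qed

section \<open>Limit sets and invariant parts\<close>

lemma omega_limit_iff: "\<tau> \<in> omega_limit r \<longleftrightarrow> (\<forall>i. \<exists>t\<ge>i. r t = \<tau>)"
proof
  assume "\<tau> \<in> omega_limit r"
  show "\<forall>i. \<exists>t\<ge>i. r t = \<tau>"
  proof
    fix i
    have "\<tau> \<in> r ` {max 1 i..}"
      using \<open>\<tau> \<in> omega_limit r\<close> unfolding omega_limit_def by simp
    then obtain t where "max 1 i \<le> t" "r t = \<tau>"
      by blast
    then show "\<exists>t\<ge>i. r t = \<tau>"
      by (intro exI[of _ t]) auto
  qed
qed (auto simp: omega_limit_def)

lemma alpha_limit_iff: "\<tau> \<in> alpha_limit r \<longleftrightarrow> (\<forall>i. \<exists>t\<le>i. r t = \<tau>)"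
proof
  assume "\<tau> \<in> alpha_limit r"
  show "\<forall>i. \<exists>t\<le>i. r t = \<tau>"
  proof
    fix i
    have "\<tau> \<in> r ` {..- max 1 (- i)}"
      using \<open>\<tau> \<in> alpha_limit r\<close> unfolding alpha_limit_def by simp
    then obtain t where "t \<le> - max 1 (- i)" "r t = \<tau>"
      by blast
    then show "\<exists>t\<le>i. r t = \<tau>"
      by (intro exI[of _ t]) auto
  qed
qed (auto simp: alpha_limit_def)

lemma alpha_limit_nonempty:
  assumes "finite (range r)"
  shows "alpha_limit r \<noteq> {}"
proof -
  have "finite (r ` {..0::int})"
    using assms by (rule finite_subset[rotated]) auto
  then obtain t0 where "t0 \<in> {..0}" and inf: "infinite {t \<in> {..0}. r t = r t0}"
    using pigeonhole_infinite[OF infinite_Iic] by blast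
  have "\<exists>t\<le>i. r t = r t0" for i
  proof (rule ccontr)
    assume "\<not> (\<exists>t\<le>i. r t = r t0)"
    then have "{t \<in> {..0}. r t = r t0} \<subseteq> {i<..0}"
      by (auto simp flip: not_le)
    with inf show False
      using finite_subset by blast
  qed
  then have "r t0 \<in> alpha_limit r"
    by (simp add: alpha_limit_iff)
  then show ?thesis
    by blast
qed

lemma inv_subset: "inv F V X \<subseteq> X"
  unfolding inv_def by blast

lemma range_subset_inv: "essential F V \<rho> \<Longrightarrow> range \<rho> \<subseteq> X \<Longrightarrow> range \<rho> \<subseteq> inv F V X"
  unfolding inv_def by blast

lemma invariant_inv: "invariant F V (inv F V X)"
  unfolding invariant_def
proof
  show "inv F V X \<subseteq> inv F V (inv F V X)"
    unfolding inv_def by (blast dest: range_subset_inv)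
qed (rule inv_subset)

lemma loop_mem_inv:
  assumes "essential F V r" and "a < b" and "r a = r b"
    and "critical F (mv V (r a)) \<or> (\<exists>k. a < k \<and> k < b \<and> mv V (r k) \<noteq> mv V (r a))"
    and "r ` {a..<b} \<subseteq> X"
  shows "r a \<in> inv F V X"
proof -
  let ?s = "periodic_extension r a b"
  have "essential F V ?s"
    using essential_solution[OF assms(1)] assms(2-4) by (rule essential_periodic_extension)
  moreover have "range ?s = r ` {a..<b}"
    using \<open>a < b\<close> by (rule range_periodic_extension)
  with \<open>a < b\<close> assms(5) have "range ?s \<subseteq> X" and "r a \<in> range ?s" and "r a \<in> X"
    by auto
  ultimately show ?thesis
    unfolding inv_def by blast
qed

text \<open>A recurring point either lies in a critical multivector or, the solution being essential,
  leaves its multivector before it recurs; either way the loop between two recurrences is essential.\<close>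

lemma omega_limit_subset_inv:
  assumes e: "essential F V r" and X: "\<forall>t\<ge>T. r t \<in> X"
  shows "omega_limit r \<subseteq> inv F V X"
proof
  fix \<tau> assume "\<tau> \<in> omega_limit r"
  then have recur: "\<exists>t\<ge>i. r t = \<tau>" for i
    by (simp add: omega_limit_iff)
  obtain a where a: "a \<ge> T" "r a = \<tau>"
    using recur by blast
  obtain k where "a \<le> k" and k: "critical F (mv V \<tau>) \<or> (a < k \<and> mv V (r k) \<noteq> mv V \<tau>)"
  proof (cases "critical F (mv V \<tau>)")
    case False
    then obtain k where "a < k" "mv V (r k) \<noteq> mv V \<tau>"
      using essentialD(2)[OF e, of a] a unfolding regular_def by blast
    then show ?thesis
      using that[of k] by simp
  qed (use that in blast)
  obtain b where "k + 1 \<le> b" "r b = \<tau>"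
    using recur by blast
  with \<open>a \<le> k\<close> k a have "a < b" "r a = r b"
    and "critical F (mv V (r a)) \<or> (\<exists>k. a < k \<and> k < b \<and> mv V (r k) \<noteq> mv V (r a))"
    by auto
  moreover have "r ` {a..<b} \<subseteq> X"
    using X a by auto
  ultimately have "r a \<in> inv F V X"
    by (rule loop_mem_inv[OF e])
  with a show "\<tau> \<in> inv F V X"
    by simp
qed

lemma alpha_limit_subset_inv:
  assumes e: "essential F V r" and X: "\<forall>t\<le>T. r t \<in> X"
  shows "alpha_limit r \<subseteq> inv F V X"
proof
  fix \<tau> assume "\<tau> \<in> alpha_limit r"
  then have recur: "\<exists>t\<le>i. r t = \<tau>" for i
    by (simp add: alpha_limit_iff)
  obtain b where b: "b \<le> T" "r b = \<tau>"
    using recur by blast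
  obtain k where "k \<le> b" and k: "critical F (mv V \<tau>) \<or> (k < b \<and> mv V (r k) \<noteq> mv V \<tau>)"
  proof (cases "critical F (mv V \<tau>)")
    case False
    then obtain k where "k < b" "mv V (r k) \<noteq> mv V \<tau>"
      using essentialD(1)[OF e, of b] b unfolding regular_def by blast
    then show ?thesis
      using that[of k] by simp
  qed (use that in blast)
  obtain a where a: "a \<le> k - 1" "r a = \<tau>"
    using recur by blast
  with \<open>k \<le> b\<close> k b have "a < b" "r a = r b"
    and "critical F (mv V (r a)) \<or> (\<exists>k. a < k \<and> k < b \<and> mv V (r k) \<noteq> mv V (r a))"
    by auto
  moreover have "r ` {a..<b} \<subseteq> X"
    using X b by auto
  ultimately have "r a \<in> inv F V X"
    by (rule loop_mem_inv[OF e])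
  with a show "\<tau> \<in> inv F V X"
    by simp
qed

section \<open>Isolated invariant sets\<close>

definition path_convex :: "'v set set set \<Rightarrow> 'v set set \<Rightarrow> 'v set set \<Rightarrow> bool" where
  "path_convex V N X \<longleftrightarrow>
     (\<forall>\<rho> a b. path_in V N a b \<rho> \<and> \<rho> a \<in> X \<and> \<rho> b \<in> X \<longrightarrow> (\<forall>i. a \<le> i \<and> i \<le> b \<longrightarrow> \<rho> i \<in> X))"

lemma path_convexD:
  assumes "path_convex V N X" and "path_in V N a b \<rho>" and "\<rho> a \<in> X" and "\<rho> b \<in> X"
    and "a \<le> i" and "i \<le> b"
  shows "\<rho> i \<in> X"
  using assms unfolding path_convex_def by blast

lemma isolated_by_iff:
  "isolated_by F V N S \<longleftrightarrow>
     invariant F V S \<and> closed_set N \<and> S \<subseteq> N \<and> (\<forall>\<sigma>\<in>S. mv V \<sigma> \<subseteq> S) \<and> path_convex V N S"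
  unfolding isolated_by_def path_convex_def ..

lemma path_in_inv:
  assumes g: "path_in V N a b g" and "g a \<in> inv F V X" and "g b \<in> inv F V X"
    and "g ` {a..b} \<subseteq> X"
  shows "g ` {a..b} \<subseteq> inv F V X"
proof -
  obtain r1 t1 where r1: "essential F V r1" "range r1 \<subseteq> X" "g a = r1 t1"
    using assms(2) unfolding inv_def by blast
  obtain r2 t2 where r2: "essential F V r2" "range r2 \<subseteq> X" "g b = r2 t2"
    using assms(3) unfolding inv_def by blast
  obtain s where "essential F V s" and s: "range s \<subseteq> range r1 \<union> g ` {a..b} \<union> range r2"
    and g_s: "g ` {a..b} \<subseteq> range s"
    using essential_splice[OF r1(1) r2(1) g r1(3) r2(3)] by blast
  have "range r1 \<union> g ` {a..b} \<union> range r2 \<subseteq> X"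
    using r1(2) r2(2) assms(4) by (intro Un_least)
  with s have "range s \<subseteq> X"
    by (rule order_trans)
  show ?thesis
  proof (rule image_subsetI)
    fix t assume "t \<in> {a..b}"
    with g_s assms(4) have "g t \<in> X" and "g t \<in> range s"
      by auto
    with \<open>essential F V s\<close> \<open>range s \<subseteq> X\<close> show "g t \<in> inv F V X"
      unfolding inv_def by blast
  qed
qed

lemma path_convex_inv:
  assumes X: "path_convex V N X"
  shows "path_convex V N (inv F V X)"
  unfolding path_convex_def
proof (intro allI impI, elim conjE)
  fix \<rho> a b i
  assume \<rho>: "path_in V N a b \<rho>" "\<rho> a \<in> inv F V X" "\<rho> b \<in> inv F V X" and "a \<le> i" "i \<le> b"
  have "\<rho> a \<in> X" "\<rho> b \<in> X"
    using \<rho>(2,3) inv_subset by blast+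
  then have "\<rho> ` {a..b} \<subseteq> X"
    using path_convexD[OF X \<rho>(1)] by auto
  with \<rho> have "\<rho> ` {a..b} \<subseteq> inv F V X"
    by (rule path_in_inv)
  with \<open>a \<le> i\<close> \<open>i \<le> b\<close> show "\<rho> i \<in> inv F V X"
    by auto
qed

lemma isolated_by_inv:
  assumes V: "multivector_field K V" and "N \<subseteq> K" and "closed_set N" and "X \<subseteq> N"
    and mv_N: "\<forall>\<sigma>\<in>X. mv V \<sigma> \<subseteq> N" and X: "path_convex V N X"
  shows "isolated_by F V N (inv F V X)"
proof -
  have convex: "path_convex V N (inv F V X)"
    using X by (rule path_convex_inv)
  have mv_inv: "mv V \<sigma> \<subseteq> inv F V X" if \<sigma>: "\<sigma> \<in> inv F V X" for \<sigma>
  proof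
    fix \<tau> assume \<tau>: "\<tau> \<in> mv V \<sigma>"
    have "\<sigma> \<in> X" "\<sigma> \<in> K"
      using \<sigma> inv_subset \<open>X \<subseteq> N\<close> \<open>N \<subseteq> K\<close> by blast+
    \<comment> \<open>the path \<sigma>, \<tau>, \<sigma> runs inside the multivector of \<sigma>\<close>
    define \<rho> where "\<rho> i = (if i = 1 then \<tau> else \<sigma>)" for i :: int
    have "\<tau> \<in> Fmap V \<sigma>" and "\<sigma> \<in> Fmap V \<tau>"
      using \<tau> mv_eq_if_mem[OF V \<open>\<sigma> \<in> K\<close> \<tau>] mv_in_field(2)[OF V \<open>\<sigma> \<in> K\<close>]
      unfolding Fmap_def by auto
    moreover have "\<tau> \<in> N" "\<sigma> \<in> N"
      using mv_N \<open>\<sigma> \<in> X\<close> \<tau> \<open>X \<subseteq> N\<close> by blast+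
    moreover have "i = 0 \<or> i = 1" if "0 \<le> i" "i < 2" for i :: int
      using that by linarith
    moreover have "i = 0 \<or> i = 1 \<or> i = 2" if "0 \<le> i" "i \<le> 2" for i :: int
      using that by linarith
    ultimately have "path_in V N 0 2 \<rho>"
      unfolding path_in_def \<rho>_def by fastforce
    then have "\<rho> 1 \<in> inv F V X"
      by (rule path_convexD[OF convex]) (simp_all add: \<rho>_def \<sigma>)
    then show "\<tau> \<in> inv F V X"
      unfolding \<rho>_def by simp
  qed
  have "inv F V X \<subseteq> N"
    using inv_subset \<open>X \<subseteq> N\<close> by blast
  with invariant_inv assms(3) mv_inv convex show ?thesis
    unfolding isolated_by_iff by blast
qed

definition step_in :: "'v set set set \<Rightarrow> 'v set set \<Rightarrow> 'v set \<Rightarrow> 'v set \<Rightarrow> bool" where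
  "step_in V N x y \<longleftrightarrow> x \<in> N \<and> y \<in> N \<and> y \<in> Fmap V x"

lemma path_extend:
  assumes "(step_in V N)\<^sup>*\<^sup>* y z" and "path_in V N 0 n r" and "r n = y"
  shows "\<exists>r' n'. n \<le> n' \<and> path_in V N 0 n' r' \<and> (\<forall>i\<le>n. r' i = r i) \<and> r' n' = z"
  using assms(1)
proof (induction rule: rtranclp_induct)
  case base
  with assms(2,3) show ?case
    by blast
next
  case (step w z)
  then obtain r' n' where "n \<le> n'" and r': "path_in V N 0 n' r'" "\<forall>i\<le>n. r' i = r i" "r' n' = w"
    by blast
  define r'' where "r'' = r'(n' + 1 := z)"
  have "path_in V N 0 (n' + 1) r''"
    using r' \<open>step_in V N w z\<close>
    unfolding path_in_def r''_def step_in_def by (auto simp: not_less)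
  moreover have "\<forall>i\<le>n. r'' i = r i"
    using r'(2) \<open>n \<le> n'\<close> unfolding r''_def by simp
  moreover have "n \<le> n' + 1" and "r'' (n' + 1) = z"
    using \<open>n \<le> n'\<close> unfolding r''_def by simp_all
  ultimately show ?case
    by blast
qed

lemma isolated_by_reach_convex:
  assumes S: "isolated_by F V N S" and "x \<in> S" and "z \<in> S"
    and "(step_in V N)\<^sup>*\<^sup>* x y" and "(step_in V N)\<^sup>*\<^sup>* y z"
  shows "y \<in> S"
proof -
  have "x \<in> N"
    using S \<open>x \<in> S\<close> unfolding isolated_by_iff by blast
  then have "path_in V N 0 0 (\<lambda>_. x)"
    unfolding path_in_def by auto
  have "\<exists>r n. 0 \<le> n \<and> path_in V N 0 n r \<and> (\<forall>i\<le>0. r i = x) \<and> r n = y"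
    by (rule path_extend[of V N x y 0 "\<lambda>_. x", OF assms(4) \<open>path_in V N 0 0 (\<lambda>_. x)\<close>]) simp
  then obtain r n where "0 \<le> n" and r: "path_in V N 0 n r" "r 0 = x" "r n = y"
    by auto
  obtain r' n' where "n \<le> n'" and r': "path_in V N 0 n' r'" "\<forall>i\<le>n. r' i = r i" "r' n' = z"
    using path_extend[OF assms(5) r(1,3)] by blast
  have "r' 0 = x" "r' n = y"
    using r'(2) r(2,3) \<open>0 \<le> n\<close> by simp_all
  have "path_convex V N S"
    using S unfolding isolated_by_iff by blast
  then have "r' n \<in> S"
    using r'(1) by (rule path_convexD) (use r'(3) \<open>r' 0 = x\<close> assms(2,3) \<open>0 \<le> n\<close> \<open>n \<le> n'\<close> in simp_all)
  with \<open>r' n = y\<close> show ?thesis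
    by simp
qed

lemma step_in_refines:
  assumes "multivector_field K V1" and "multivector_field K V2" and "refines V2 V1"
    and "N \<subseteq> K"
  shows "step_in V2 N \<le> step_in V1 N"
  using Fmap_refines_subset[OF assms(1-3)] assms(4) unfolding step_in_def by blast

section \<open>Lyapunov functions and Morse decompositions\<close>

definition lyapunov :: "'v set set set \<Rightarrow> 'v set set \<Rightarrow> ('v set \<Rightarrow> nat) \<Rightarrow> bool" where
  "lyapunov V S L \<longleftrightarrow> (\<forall>x\<in>S. \<forall>y\<in>S. y \<in> Fmap V x \<longrightarrow> L y \<le> L x)"

lemma lyapunov_path_antimono:
  assumes L: "lyapunov V S L" and \<rho>: "path_in V S a b \<rho>" and "a \<le> i" and "i \<le> j" and "j \<le> b"
  shows "L (\<rho> j) \<le> L (\<rho> i)"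
  using \<open>i \<le> j\<close> \<open>j \<le> b\<close>
proof (induction j rule: int_ge_induct)
  case base
  then show ?case
    by simp
next
  case (step k)
  with \<rho> \<open>a \<le> i\<close> have "\<rho> k \<in> S" "\<rho> (k + 1) \<in> S" "\<rho> (k + 1) \<in> Fmap V (\<rho> k)"
    unfolding path_in_def by simp_all
  with L have "L (\<rho> (k + 1)) \<le> L (\<rho> k)"
    unfolding lyapunov_def by blast
  with step show ?case
    by simp
qed

lemma path_in_solution:
  assumes "is_solution V \<rho>" and "range \<rho> \<subseteq> S" and "a \<le> b"
  shows "path_in V S a b \<rho>"
  using assms unfolding is_solution_def path_in_def by blast

lemma isolated_by_lyapunov_level:
  assumes V: "multivector_field K V" and "N \<subseteq> K" and S: "isolated_by F V N S"
    and L: "lyapunov V S L"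
  shows "isolated_by F V N (inv F V {\<sigma>\<in>S. L \<sigma> = p})"
proof (rule isolated_by_inv[OF V \<open>N \<subseteq> K\<close>])
  have S_conv: "path_convex V N S"
    using S unfolding isolated_by_iff by blast
  show "closed_set N" and "{\<sigma>\<in>S. L \<sigma> = p} \<subseteq> N" and "\<forall>\<sigma>\<in>{\<sigma>\<in>S. L \<sigma> = p}. mv V \<sigma> \<subseteq> N"
    using S unfolding isolated_by_iff by blast+
  show "path_convex V N {\<sigma>\<in>S. L \<sigma> = p}"
    unfolding path_convex_def
  proof (intro allI impI, elim conjE)
    fix \<rho> a b i
    assume \<rho>: "path_in V N a b \<rho>" and ends: "\<rho> a \<in> {\<sigma>\<in>S. L \<sigma> = p}" "\<rho> b \<in> {\<sigma>\<in>S. L \<sigma> = p}"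
      and "a \<le> i" "i \<le> b"
    have in_S: "\<rho> j \<in> S" if "a \<le> j" "j \<le> b" for j
      using path_convexD[OF S_conv \<rho>] ends that by blast
    with \<rho> have \<rho>_S: "path_in V S a b \<rho>"
      unfolding path_in_def by blast
    have "L (\<rho> b) \<le> L (\<rho> i)" and "L (\<rho> i) \<le> L (\<rho> a)"
      using lyapunov_path_antimono[OF L \<rho>_S] \<open>a \<le> i\<close> \<open>i \<le> b\<close> by simp_all
    with ends in_S[OF \<open>a \<le> i\<close> \<open>i \<le> b\<close>] show "\<rho> i \<in> {\<sigma>\<in>S. L \<sigma> = p}"
      by simp
  qed
qed

lemma lyapunov_solution_limits:
  assumes e: "essential F V \<rho>" and "range \<rho> \<subseteq> S" and L: "lyapunov V S L"
    and "finite (L ` S)"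
  defines "level p \<equiv> inv F V {\<sigma>\<in>S. L \<sigma> = p}"
  shows "(\<exists>p\<in>L ` S. range \<rho> \<subseteq> level p)
    \<or> (\<exists>p\<in>L ` S. \<exists>q\<in>L ` S. p < q \<and> alpha_limit \<rho> \<subseteq> level q \<and> omega_limit \<rho> \<subseteq> level p)"
proof -
  define f where "f = L \<circ> \<rho>"
  have antimono: "f t \<le> f s" if "s \<le> t" for s t
    using lyapunov_path_antimono[OF L path_in_solution[OF essential_solution[OF e] \<open>range \<rho> \<subseteq> S\<close> that]]
      that unfolding f_def by simp
  have range_f: "range f \<subseteq> L ` S"
    using \<open>range \<rho> \<subseteq> S\<close> unfolding f_def by auto
  then have "finite (range f)"
    using \<open>finite (L ` S)\<close> by (rule finite_subset)
  define p q where "p = Min (range f)" and "q = Max (range f)"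
  have "p \<in> range f" and "q \<in> range f"
    using \<open>finite (range f)\<close> unfolding p_def q_def by (simp_all add: Min_in Max_in)
  then obtain tp tq where "f tp = p" and "f tq = q"
    by (metis rangeE)
  have bounds: "p \<le> f t" "f t \<le> q" for t
    using \<open>finite (range f)\<close> unfolding p_def q_def by simp_all
  have late: "\<forall>t\<ge>tp. \<rho> t \<in> {\<sigma>\<in>S. L \<sigma> = p}" and early: "\<forall>t\<le>tq. \<rho> t \<in> {\<sigma>\<in>S. L \<sigma> = q}"
    using antimono bounds \<open>f tp = p\<close> \<open>f tq = q\<close> \<open>range \<rho> \<subseteq> S\<close> unfolding f_def
    by (auto intro: order.antisym)
  have "p \<in> L ` S" "q \<in> L ` S"
    using range_f \<open>f tp = p\<close> \<open>f tq = q\<close> by blast+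
  show ?thesis
  proof (cases "p = q")
    case True
    then have "range \<rho> \<subseteq> {\<sigma>\<in>S. L \<sigma> = p}"
      using bounds \<open>range \<rho> \<subseteq> S\<close> unfolding f_def by (auto intro: order.antisym)
    then have "range \<rho> \<subseteq> level p"
      unfolding level_def by (rule range_subset_inv[OF e])
    with \<open>p \<in> L ` S\<close> show ?thesis
      by blast
  next
    case False
    with bounds(1)[of tp] bounds(2)[of tp] have "p < q"
      by simp
    moreover have "omega_limit \<rho> \<subseteq> level p" and "alpha_limit \<rho> \<subseteq> level q"
      unfolding level_def using omega_limit_subset_inv[OF e late] alpha_limit_subset_inv[OF e early] .
    ultimately show ?thesis
      using \<open>p \<in> L ` S\<close> \<open>q \<in> L ` S\<close> by blast
  qed
qed

lemma morse_decomposition_lyapunov_levels: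
  assumes V: "multivector_field K V" and "N \<subseteq> K" and S: "isolated_by F V N S"
    and L: "lyapunov V S L" and "finite (L ` S)"
  shows "morse_decomposition F K V S (L ` S) (\<le>) (\<lambda>p. inv F V {\<sigma>\<in>S. L \<sigma> = p})"
  unfolding morse_decomposition_def
proof (intro conjI ballI allI impI)
  fix p
  show "inv F V {\<sigma>\<in>S. L \<sigma> = p} \<subseteq> S"
    using inv_subset by blast
  show "isolated_invariant F K V (inv F V {\<sigma>\<in>S. L \<sigma> = p})"
    unfolding isolated_invariant_def using isolated_by_lyapunov_level[OF V \<open>N \<subseteq> K\<close> S L] \<open>N \<subseteq> K\<close> by blast
next
  fix p q :: nat assume "p \<noteq> q"
  then show "inv F V {\<sigma>\<in>S. L \<sigma> = p} \<inter> inv F V {\<sigma>\<in>S. L \<sigma> = q} = {}"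
    using inv_subset by blast
next
  fix \<rho> assume \<rho>: "essential F V \<rho> \<and> range \<rho> \<subseteq> S"
  have "(\<exists>p\<in>L ` S. range \<rho> \<subseteq> inv F V {\<sigma>\<in>S. L \<sigma> = p})
    \<or> (\<exists>p\<in>L ` S. \<exists>q\<in>L ` S. p < q
        \<and> alpha_limit \<rho> \<subseteq> inv F V {\<sigma>\<in>S. L \<sigma> = q} \<and> omega_limit \<rho> \<subseteq> inv F V {\<sigma>\<in>S. L \<sigma> = p})"
    by (rule lyapunov_solution_limits[OF conjunct1[OF \<rho>] conjunct2[OF \<rho>] L \<open>finite (L ` S)\<close>])
  then show "(\<exists>r\<in>L ` S. range \<rho> \<subseteq> inv F V {\<sigma>\<in>S. L \<sigma> = r})
    \<or> (\<exists>p\<in>L ` S. \<exists>q\<in>L ` S. p \<le> q \<and> q \<noteq> p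
        \<and> alpha_limit \<rho> \<subseteq> inv F V {\<sigma>\<in>S. L \<sigma> = q} \<and> omega_limit \<rho> \<subseteq> inv F V {\<sigma>\<in>S. L \<sigma> = p})"
    by (blast dest: less_imp_le less_imp_neq[symmetric])
qed (use \<open>finite (L ` S)\<close> in auto)

lemma minimal_lyapunov_constant:
  assumes "finite K" and V: "multivector_field K V" and "N \<subseteq> K" and S: "isolated_by F V N S"
    and "minimal F K V S" and L: "lyapunov V S L" and "x \<in> S" and "y \<in> S"
  shows "L x = L y"
proof -
  have "S \<subseteq> K"
    using S \<open>N \<subseteq> K\<close> unfolding isolated_by_iff by blast
  then have fin: "finite (L ` S)"
    using \<open>finite K\<close> finite_subset by blast
  have "x \<in> inv F V S"
    using S \<open>x \<in> S\<close> unfolding isolated_by_iff invariant_def by blast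
  then obtain \<rho> where e: "essential F V \<rho>" and "range \<rho> \<subseteq> S"
    unfolding inv_def by blast
  have "alpha_limit \<rho> \<noteq> {}"
    using \<open>range \<rho> \<subseteq> S\<close> \<open>S \<subseteq> K\<close> \<open>finite K\<close> by (intro alpha_limit_nonempty) (meson finite_subset order.trans)
  then obtain p where "p \<in> L ` S" and "inv F V {\<sigma>\<in>S. L \<sigma> = p} \<noteq> {}"
    using lyapunov_solution_limits[OF e \<open>range \<rho> \<subseteq> S\<close> L fin] by blast
  then have "inv F V {\<sigma>\<in>S. L \<sigma> = p} = S"
    using \<open>minimal F K V S\<close> morse_decomposition_lyapunov_levels[OF V \<open>N \<subseteq> K\<close> S L fin]
    unfolding minimal_def by blast
  then have "S \<subseteq> {\<sigma>\<in>S. L \<sigma> = p}"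
    using inv_subset by metis
  with \<open>x \<in> S\<close> \<open>y \<in> S\<close> show ?thesis
    by auto
qed

definition reach_level :: "('a \<Rightarrow> 'a \<Rightarrow> bool) \<Rightarrow> 'a set \<Rightarrow> 'a \<Rightarrow> nat" where
  "reach_level s A x = (if x \<in> A then 1 else if \<exists>a\<in>A. s\<^sup>*\<^sup>* x a then 2 else 0)"

lemma reach_level_eq_1_iff: "reach_level s A x = 1 \<longleftrightarrow> x \<in> A"
  unfolding reach_level_def by simp

lemma reach_level_step_le:
  assumes convex: "\<And>x y z. x \<in> A \<Longrightarrow> z \<in> A \<Longrightarrow> s\<^sup>*\<^sup>* x y \<Longrightarrow> s\<^sup>*\<^sup>* y z \<Longrightarrow> y \<in> A"
    and "s x y"
  shows "reach_level s A y \<le> reach_level s A x"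
proof -
  have "s\<^sup>*\<^sup>* x y"
    using \<open>s x y\<close> by simp
  then have "s\<^sup>*\<^sup>* x a" if "s\<^sup>*\<^sup>* y a" for a
    using that by (rule rtranclp_trans)
  moreover have "y \<in> A" if "x \<in> A" "a \<in> A" "s\<^sup>*\<^sup>* y a" for a
    using convex[OF that(1,2) \<open>s\<^sup>*\<^sup>* x y\<close> that(3)] .
  ultimately show ?thesis
    unfolding reach_level_def using \<open>s x y\<close> by fastforce
qed

lemma minimal_subset_reach_convex:
  assumes "finite K" and V: "multivector_field K V" and "N \<subseteq> K" and S: "isolated_by F V N S"
    and "minimal F K V S"
    and convex: "\<And>x y z. x \<in> A \<Longrightarrow> z \<in> A \<Longrightarrow> (step_in V N)\<^sup>*\<^sup>* x y \<Longrightarrow> (step_in V N)\<^sup>*\<^sup>* y z \<Longrightarrow> y \<in> A"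
    and "S \<inter> A \<noteq> {}"
  shows "S \<subseteq> A"
proof
  let ?L = "reach_level (step_in V N) A"
  have "S \<subseteq> N"
    using S unfolding isolated_by_iff by blast
  have "lyapunov V S ?L"
    unfolding lyapunov_def
  proof (intro ballI impI)
    fix x y assume "x \<in> S" "y \<in> S" "y \<in> Fmap V x"
    with \<open>S \<subseteq> N\<close> have "step_in V N x y"
      unfolding step_in_def by blast
    then show "?L y \<le> ?L x"
      by (rule reach_level_step_le[rotated]) (rule convex; assumption)
  qed
  obtain \<sigma> where "\<sigma> \<in> S" "\<sigma> \<in> A"
    using \<open>S \<inter> A \<noteq> {}\<close> by blast
  fix \<tau> assume "\<tau> \<in> S"
  with \<open>\<sigma> \<in> S\<close> have "?L \<tau> = ?L \<sigma>"
    using minimal_lyapunov_constant[OF assms(1-5) \<open>lyapunov V S ?L\<close>] by blast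
  also have "?L \<sigma> = 1"
    unfolding reach_level_eq_1_iff by (rule \<open>\<sigma> \<in> A\<close>)
  finally show "\<tau> \<in> A"
    unfolding reach_level_eq_1_iff .
qed

theorem proposition20:
  fixes F :: "'f::{field,finite} itself"
    and K N M1 M2 :: "'v::linorder set set"
    and V1 V2 :: "'v set set set"
  assumes "simplicial_complex K"
    and "N \<subseteq> K" and "closed_set N"
    and "multivector_field K V1" and "multivector_field K V2"
    and "refines V2 V1"
    and "isolated_by F V1 N M1"
    and "isolated_by F V2 N M2" and "minimal F K V2 M2"
    and "M1 \<inter> M2 \<noteq> {}"
  shows "M2 \<subseteq> M1"
proof (rule minimal_subset_reach_convex[OF _ assms(5,2,8,9)])
  show "finite K"
    using assms(1) unfolding simplicial_complex_def by blast
  show "M2 \<inter> M1 \<noteq> {}"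
    using assms(10) by blast
  fix x y z
  assume "x \<in> M1" "z \<in> M1" "(step_in V2 N)\<^sup>*\<^sup>* x y" "(step_in V2 N)\<^sup>*\<^sup>* y z"
  moreover have "(step_in V2 N)\<^sup>*\<^sup>* \<le> (step_in V1 N)\<^sup>*\<^sup>*"
    using step_in_refines[OF assms(4,5,6,2)] by (rule rtranclp_mono)
  ultimately show "y \<in> M1"
    using isolated_by_reach_convex[OF assms(7)] by blast
qed

end
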